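(* Let $m\ge0$, $n\ge1$, and let $\lambda\in Q_4(m,n)$ have $m$-Durfee rectangle symbol $(\alpha,\beta)_{(m+j)\times j}$ with $s=\ell(\alpha)$, $t=\ell(\beta)$. Then there exists an integer $k$ with $1\le k\le s$ such that $\alpha_{k+1}\le\beta_k-1$ and $\alpha_k\ge\beta_{k+1}-1$.
   Context: Partitions: $\lambda_1\ge\cdots\ge\lambda_\ell>0$, $\ell(\lambda)=\ell$, $\lambda_i=0$ for $i>\ell$ (in particular $\alpha_{s+1}=0$), $s(\lambda)$ the smallest part with $s(\emptyset)=+\infty$. Rank-set of $\lambda$ $=[-\lambda_1,1-\lambda_2,\dots,\ell-1-\lambda_\ell,\ell,\ell+1,\dots]$. $Q(m,n)$: partitions of $n$ whose rank-set contains $m$. $m$-Durfee rectangle symbol $(\alpha,\beta)_{(m+j)\times j}$ of $\lambda$: $j\ge0$ is the largest integer with $\lambda_{m+j}\ge j$; $\alpha$ is the conjugate of $(\lambda_1-j,\dots,\lambda_{m+j}-j)$ and $\beta=(\lambda_{m+j+1},\lambda_{m+j+2},\dots)$. $Q_4(m,n)$ is the set of $\lambda\in Q(m,n)$ whose symbol has $j\ge1$, $\beta_1=j$, $\ell(\beta)-\ell(\alpha)\ge1$, $\alpha_1=m+j>\alpha_2$ and $s(\beta)\ge2$. (For $\lambda\in Q(m,n)$ with $j\ge1$ one always has $\beta_1=j$.) *)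

theory Defs
  imports Main "HOL-Library.Extended_Nat"
begin

definition is_partition :: "nat list \<Rightarrow> bool" where
  "is_partition lam \<longleftrightarrow> sorted_wrt (\<ge>) lam \<and> (\<forall>x\<in>set lam. 0 < x)"

definition part :: "nat list \<Rightarrow> nat \<Rightarrow> nat" where
  "part lam i = (if 1 \<le> i \<and> i \<le> length lam then lam ! (i - 1) else 0)"

definition smallest_part :: "nat list \<Rightarrow> enat" where
  "smallest_part lam = (if lam = [] then \<infinity> else enat (Min (set lam)))"

definition rank_set :: "nat list \<Rightarrow> int set" where
  "rank_set lam = {int (i - 1) - int (part lam i) | i. 1 \<le> i \<and> i \<le> length lam}
                  \<union> {int k | k. length lam \<le> k}"

definition Q :: "nat \<Rightarrow> nat \<Rightarrow> nat list set" where
  "Q m n = {lam. is_partition lam \<and> sum_list lam = n \<and> int m \<in> rank_set lam}"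

definition conjugate :: "nat list \<Rightarrow> nat list" where
  "conjugate mu = map (\<lambda>i. length (filter (\<lambda>x. i \<le> x) mu)) [1..<Suc (Max (set mu \<union> {0}))]"

definition durfee_j :: "nat \<Rightarrow> nat list \<Rightarrow> nat" where
  "durfee_j m lam = (GREATEST j. j \<le> part lam (m + j))"

definition durfee_alpha :: "nat \<Rightarrow> nat list \<Rightarrow> nat list" where
  "durfee_alpha m lam = (let j = durfee_j m lam in
      conjugate (map (\<lambda>x. x - j) (take (m + j) lam)))"

definition durfee_beta :: "nat \<Rightarrow> nat list \<Rightarrow> nat list" where
  "durfee_beta m lam = drop (m + durfee_j m lam) lam"

definition Q4 :: "nat \<Rightarrow> nat \<Rightarrow> nat list set" where
  "Q4 m n = {lam \<in> Q m n.
     (let j = durfee_j m lam; a = durfee_alpha m lam; b = durfee_beta m lam in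
        1 \<le> j \<and> part b 1 = j \<and> int (length b) - int (length a) \<ge> 1
        \<and> part a 1 = m + j \<and> m + j > part a 2 \<and> smallest_part b \<ge> 2)}"

end

theory Submission
  imports Defs
begin

text \<open>Take the least \<open>k \<ge> 1\<close> with \<open>\<alpha>\<^sub>k\<^sub>+\<^sub>1 < \<beta>\<^sub>k\<close>; it exists and is at most \<open>s\<close>
  because \<open>\<alpha>\<^sub>s\<^sub>+\<^sub>1 = 0 < \<beta>\<^sub>s\<close> (as \<open>\<ell>(\<beta>) > s\<close>).  For \<open>k = 1\<close> the second inequality
  is \<open>\<beta>\<^sub>2 \<le> \<beta>\<^sub>1 = j \<le> m + j = \<alpha>\<^sub>1\<close>; for \<open>k > 1\<close> minimality gives
  \<open>\<beta>\<^sub>k\<^sub>+\<^sub>1 \<le> \<beta>\<^sub>k\<^sub>-\<^sub>1 \<le> \<alpha>\<^sub>k\<close>.\<close>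

lemma part_antimono:
  assumes "sorted_wrt (\<ge>) xs" "1 \<le> i" "i \<le> i'"
  shows "part xs i' \<le> part xs i"
proof (cases "i' \<le> length xs")
  case True
  then show ?thesis using assms unfolding part_def
    by (cases "i = i'") (auto simp: sorted_wrt_iff_nth_less)
next
  case False
  then show ?thesis unfolding part_def by auto
qed

lemma part_beyond_length: "length xs < i \<Longrightarrow> part xs i = 0"
  unfolding part_def by simp

lemma part_pos:
  assumes "\<forall>x\<in>set xs. 0 < x" "1 \<le> i" "i \<le> length xs"
  shows "0 < part xs i"
  using assms unfolding part_def by auto

lemma exists_interlacing_index:
  fixes a b :: "nat \<Rightarrow> nat"
  assumes b_antimono: "\<And>i i'. 1 \<le> i \<Longrightarrow> i \<le> i' \<Longrightarrow> b i' \<le> b i"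
    and start: "b 2 \<le> a 1"
    and "1 \<le> s" and "a (s + 1) < b s"
  shows "\<exists>k. 1 \<le> k \<and> k \<le> s \<and> a (k + 1) < b k \<and> b (k + 1) \<le> a k"
  using assms(3,4)
proof (induction s rule: nat_induct_at_least)
  case base
  then show ?case using start by (intro exI[of _ 1]) (simp add: numeral_2_eq_2)
next
  case (Suc s)
  show ?case
  proof (cases "a (s + 1) < b s")
    case True
    then obtain k where "1 \<le> k \<and> k \<le> s \<and> a (k + 1) < b k \<and> b (k + 1) \<le> a k"
      using Suc.IH by blast
    then show ?thesis by (intro exI[of _ k]) auto
  next
    case False
    moreover have "b (Suc s + 1) \<le> b s" using b_antimono \<open>1 \<le> s\<close> by simp
    ultimately show ?thesis using Suc.prems \<open>1 \<le> s\<close> by (intro exI[of _ "Suc s"]) auto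
  qed
qed

theorem proposition4p4:
  fixes m n :: nat and lam alpha beta :: "nat list"
  assumes "1 \<le> n"
    and "lam \<in> Q4 m n"
    and "alpha = durfee_alpha m lam"
    and "beta = durfee_beta m lam"
  shows "\<exists>k. 1 \<le> k \<and> k \<le> length alpha
           \<and> int (part alpha (k + 1)) \<le> int (part beta k) - 1
           \<and> int (part alpha k) \<ge> int (part beta (k + 1)) - 1"
proof -
  define j where "j = durfee_j m lam"
  have symbol: "part beta 1 = j" "int (length beta) - int (length alpha) \<ge> 1"
    "part alpha 1 = m + j" "1 \<le> j" and lam: "is_partition lam"
    using assms(2) unfolding Q4_def Q_def Let_def assms(3,4) j_def by auto
  have beta_sorted: "sorted_wrt (\<ge>) beta" and beta_pos: "\<forall>x\<in>set beta. 0 < x"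
    using lam unfolding assms(4) durfee_beta_def is_partition_def
    by (auto simp: sorted_wrt_drop dest: in_set_dropD)
  define s where "s = length alpha"
  have "1 \<le> s" using symbol(3,4) unfolding s_def part_def by (auto split: if_splits)
  moreover have "part alpha (s + 1) < part beta s"
    using part_pos[OF beta_pos \<open>1 \<le> s\<close>] symbol(2) part_beyond_length[of alpha]
    unfolding s_def by simp
  moreover have "part beta 2 \<le> part alpha 1"
    using part_antimono[OF beta_sorted, of 1 2] symbol(1,3) by simp
  ultimately obtain k where "1 \<le> k" "k \<le> s"
      "part alpha (k + 1) < part beta k" "part beta (k + 1) \<le> part alpha k"
    using exists_interlacing_index[of "part beta" "part alpha" s] part_antimono[OF beta_sorted]
    by blast
  then show ?thesis unfolding s_def by (intro exI[of _ k]) auto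
qed

end
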